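(* Let $d\geq 2$ and $n_1,\dots,n_d\geq 1$ be integers and let $G_1,G_2$ be graphs. Then $K_{n_1,\dots,n_d}$ is isomorphic to a subgraph of $G_1\boxtimes G_2$ if and only if there exist non-negative integers $a_1,\dots,a_d,b_1,\dots,b_d,z_1,\dots,z_d,x,y$ such that: (i) $K_{a_1,\dots,a_d,\overline{x}}$ is isomorphic to a subgraph of $G_1$; (ii) $K_{b_1,\dots,b_d,\overline{y}}$ is isomorphic to a subgraph of $G_2$; (iii) $n_j \leq a_jb_j+a_jy+b_jx+z_j$ for all $j\in\{1,\dots,d\}$; and (iv) $z_1+\dots+z_d\leq xy$.
   Context: The strong product $G_1 \boxtimes G_2$ has vertex set $V(G_1)\times V(G_2)$, with distinct vertices $(a,v),(b,u)$ adjacent iff ($a=b$ or $ab\in E(G_1)$) and ($u=v$ or $uv\in E(G_2)$). For non-negative integers $a_1,\dots,a_d,x$, the graph $K_{a_1,\dots,a_d,\overline{x}}$ has vertex set $A_1\cup\dots\cup A_d\cup X$, a disjoint union with $|A_j|=a_j$ and $|X|=x$, in which two distinct vertices are adjacent iff they lie in different sets among $A_1,\dots,A_d,X$ or both lie in $X$ (so $X$ is a clique, each $A_j$ is independent, and parts may be empty). $K_{n_1,\dots,n_d}$ denotes the complete $d$-partite graph with parts of sizes $n_1,\dots,n_d$. *)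

theory Defs
  imports Main
begin

type_synonym 'a graph = "'a set \<times> ('a \<Rightarrow> 'a \<Rightarrow> bool)"

definition verts :: "'a graph \<Rightarrow> 'a set" where "verts G = fst G"
definition adj :: "'a graph \<Rightarrow> 'a \<Rightarrow> 'a \<Rightarrow> bool" where "adj G = snd G"

definition graph :: "'a graph \<Rightarrow> bool" where
  "graph G \<longleftrightarrow>
     (\<forall>u v. adj G u v \<longrightarrow> u \<in> verts G \<and> v \<in> verts G) \<and>
     (\<forall>u v. adj G u v \<longrightarrow> adj G v u) \<and>
     (\<forall>v. \<not> adj G v v)"

definition subgraph_iso :: "'a graph \<Rightarrow> 'b graph \<Rightarrow> bool" where
  "subgraph_iso H G \<longleftrightarrow>
     (\<exists>f. inj_on f (verts H) \<and> f ` verts H \<subseteq> verts G \<and>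
          (\<forall>u\<in>verts H. \<forall>v\<in>verts H. adj H u v \<longrightarrow> adj G (f u) (f v)))"

definition strong_product :: "'a graph \<Rightarrow> 'b graph \<Rightarrow> ('a \<times> 'b) graph" where
  "strong_product G1 G2 =
     (verts G1 \<times> verts G2,
      \<lambda>(a, v) (b, u). (a, v) \<noteq> (b, u) \<and>
         (a = b \<or> adj G1 a b) \<and> (u = v \<or> adj G2 v u))"

text \<open>K_{a_1,...,a_d, overline x}: parts A_j = {(j,i). i < a j} for j < d
(indices 0..d-1) and the clique X = {(d,i). i < x}.\<close>
definition K_clique :: "nat \<Rightarrow> (nat \<Rightarrow> nat) \<Rightarrow> nat \<Rightarrow> (nat \<times> nat) graph" where
  "K_clique d a x =
     ({(j, i). j < d \<and> i < a j} \<union> {(j, i). j = d \<and> i < x},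
      \<lambda>(j, i) (k, l). (j, i) \<in> {(j, i). j < d \<and> i < a j} \<union> {(j, i). j = d \<and> i < x} \<and>
                      (k, l) \<in> {(j, i). j < d \<and> i < a j} \<union> {(j, i). j = d \<and> i < x} \<and>
                      (j, i) \<noteq> (k, l) \<and> (j \<noteq> k \<or> j = d))"

definition K_multipartite :: "nat \<Rightarrow> (nat \<Rightarrow> nat) \<Rightarrow> (nat \<times> nat) graph" where
  "K_multipartite d n =
     ({(j, i). j < d \<and> i < n j},
      \<lambda>(j, i) (k, l). (j, i) \<in> {(j, i). j < d \<and> i < n j} \<and>
                      (k, l) \<in> {(j, i). j < d \<and> i < n j} \<and> j \<noteq> k)"

end

(*
  Call a family of vertex sets cross-adjacent if distinct vertices from different members are
  always adjacent. An embedding of K_{n_1,...,n_d} into G1 \<boxtimes> G2 maps the parts to a disjoint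
  cross-adjacent family V_j, and the projections P_j of the V_j to G1 are again cross-adjacent.
  The vertices X lying in two or more of the P_j then form a clique that is complete to the
  disjoint sets A_j = P_j - X, giving K_{a_1,...,a_d,X} in G1; likewise B_j and Y in G2. Since
  V_j lies in (A_j \<union> X) \<times> (B_j \<union> Y), it has at most |A_j||B_j| + |A_j||Y| + |B_j||X| vertices
  outside the corner X \<times> Y, and the pieces Z_j = V_j \<inter> (X \<times> Y) of the corner are disjoint.
  Conversely, cutting X \<times> Y into disjoint pieces Z_j of sizes z_j and adding Z_j to the rest of
  (A_j \<union> X) \<times> (B_j \<union> Y) gives such a family inside the product of the two complete graphs.
*)
theory Submission
  imports Defs "HOL-Library.Disjoint_Sets"
begin

lemma verts_K_clique:
  "verts (K_clique d a x) = (SIGMA j:{..d}. {..<(if j < d then a j else x)})"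
  by (auto simp: verts_def K_clique_def split: if_splits)

lemma adj_K_clique:
  "adj (K_clique d a x) p q \<longleftrightarrow>
     p \<in> verts (K_clique d a x) \<and> q \<in> verts (K_clique d a x) \<and> p \<noteq> q \<and> (fst p \<noteq> fst q \<or> fst p = d)"
  by (cases p, cases q) (simp add: verts_def adj_def K_clique_def)

lemma verts_K_multipartite: "verts (K_multipartite d n) = (SIGMA j:{..<d}. {..<n j})"
  by (auto simp: verts_def K_multipartite_def)

lemma adj_K_multipartite:
  "adj (K_multipartite d n) p q \<longleftrightarrow>
     p \<in> verts (K_multipartite d n) \<and> q \<in> verts (K_multipartite d n) \<and> fst p \<noteq> fst q"
  by (cases p, cases q) (simp add: verts_def adj_def K_multipartite_def)

lemma verts_strong_product: "verts (strong_product G1 G2) = verts G1 \<times> verts G2"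
  by (simp add: verts_def strong_product_def)

lemma adj_strong_product:
  "adj (strong_product G1 G2) p q \<longleftrightarrow>
     p \<noteq> q \<and> (fst p = fst q \<or> adj G1 (fst p) (fst q)) \<and> (snd p = snd q \<or> adj G2 (snd p) (snd q))"
  by (cases p, cases q) (auto simp: adj_def strong_product_def)

definition cross_adjacent :: "'a graph \<Rightarrow> 'i set \<Rightarrow> ('i \<Rightarrow> 'a set) \<Rightarrow> bool" where
  "cross_adjacent G I P \<longleftrightarrow>
     (\<forall>j\<in>I. \<forall>k\<in>I. j \<noteq> k \<longrightarrow> (\<forall>p\<in>P j. \<forall>q\<in>P k. p \<noteq> q \<longrightarrow> adj G p q))"

lemma cross_adjacentD:
  "cross_adjacent G I P \<Longrightarrow> j \<in> I \<Longrightarrow> k \<in> I \<Longrightarrow> j \<noteq> k \<Longrightarrow> p \<in> P j \<Longrightarrow> q \<in> P k \<Longrightarrow> p \<noteq> q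
    \<Longrightarrow> adj G p q"
  unfolding cross_adjacent_def by blast

lemma cross_adjacent_mono:
  "cross_adjacent G I P \<Longrightarrow> (\<And>j. j \<in> I \<Longrightarrow> Q j \<subseteq> P j) \<Longrightarrow> cross_adjacent G I Q"
  unfolding cross_adjacent_def by blast

lemma obtain_inj_on_Sigma_into_parts:
  assumes "\<And>j. j \<in> I \<Longrightarrow> finite (S j)" and "\<And>j. j \<in> I \<Longrightarrow> m j \<le> card (S j)"
    and "disjoint_family_on S I"
  obtains h where "inj_on h (SIGMA j:I. {..<m j})" and "\<And>j i. j \<in> I \<Longrightarrow> i < m j \<Longrightarrow> h (j, i) \<in> S j"
proof -
  have "\<forall>j\<in>I. \<exists>g. g ` {..<m j} \<subseteq> S j \<and> inj_on g {..<m j}"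
    using assms(1,2) by (simp add: card_le_inj)
  then have "\<exists>g. \<forall>j\<in>I. g j ` {..<m j} \<subseteq> S j \<and> inj_on (g j) {..<m j}"
    by (rule bchoice)
  then obtain g where g: "\<forall>j\<in>I. g j ` {..<m j} \<subseteq> S j \<and> inj_on (g j) {..<m j}"
    by blast
  have "inj_on (\<lambda>(j, i). g j i) (SIGMA j:I. {..<m j})"
  proof (rule inj_onI)
    fix u v assume u: "u \<in> (SIGMA j:I. {..<m j})" and v: "v \<in> (SIGMA j:I. {..<m j})"
      and eq: "(\<lambda>(j, i). g j i) u = (\<lambda>(j, i). g j i) v"
    obtain j i k l where uv: "u = (j, i)" "v = (k, l)"
      by (cases u, cases v)
    with u v have j: "j \<in> I" "i < m j" and k: "k \<in> I" "l < m k"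
      by auto
    from eq uv have g_eq: "g j i = g k l"
      by simp
    have "g j i \<in> S j" "g k l \<in> S k"
      using g j k by auto
    then have "j = k"
      using disjoint_family_onD[OF assms(3) j(1) k(1)] g_eq by auto
    with g_eq g j k have "i = l"
      by (auto dest: inj_onD)
    with \<open>j = k\<close> uv show "u = v"
      by simp
  qed
  with g show thesis
    by (intro that[of "\<lambda>(j, i). g j i"]) auto
qed

lemma subgraph_iso_K_multipartiteI:
  assumes "\<And>j. j < d \<Longrightarrow> finite (T j)" and "\<And>j. j < d \<Longrightarrow> T j \<subseteq> verts G"
    and "\<And>j. j < d \<Longrightarrow> n j \<le> card (T j)"
    and "disjoint_family_on T {..<d}" and "cross_adjacent G {..<d} T"
  shows "subgraph_iso (K_multipartite d n) G"
proof -
  obtain h where inj: "inj_on h (SIGMA j:{..<d}. {..<n j})"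
    and h_in: "\<And>j i. j \<in> {..<d} \<Longrightarrow> i < n j \<Longrightarrow> h (j, i) \<in> T j"
    using obtain_inj_on_Sigma_into_parts[of "{..<d}" T n] assms(1,3,4) by blast
  show ?thesis
    unfolding subgraph_iso_def
  proof (intro exI[of _ h] conjI ballI impI)
    show "inj_on h (verts (K_multipartite d n))"
      using inj by (simp add: verts_K_multipartite)
    show "h ` verts (K_multipartite d n) \<subseteq> verts G"
      using h_in assms(2) by (force simp: verts_K_multipartite)
  next
    fix u v assume "adj (K_multipartite d n) u v"
    then have u: "u \<in> (SIGMA j:{..<d}. {..<n j})" and v: "v \<in> (SIGMA j:{..<d}. {..<n j})"
      and "fst u \<noteq> fst v"
      by (auto simp: adj_K_multipartite verts_K_multipartite)
    moreover have "h u \<noteq> h v"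
      using inj u v \<open>fst u \<noteq> fst v\<close> by (auto dest: inj_onD)
    ultimately show "adj G (h u) (h v)"
      using h_in assms(5) by (auto intro: cross_adjacentD)
  qed
qed

lemma subgraph_iso_K_cliqueI:
  assumes "\<And>j. j \<le> d \<Longrightarrow> finite (S j)" and "\<And>j. j \<le> d \<Longrightarrow> S j \<subseteq> verts G"
    and "disjoint_family_on S {..d}" and "cross_adjacent G {..d} S"
    and "\<And>p q. p \<in> S d \<Longrightarrow> q \<in> S d \<Longrightarrow> p \<noteq> q \<Longrightarrow> adj G p q"
    and "\<And>j. j < d \<Longrightarrow> a j \<le> card (S j)" and "x \<le> card (S d)"
  shows "subgraph_iso (K_clique d a x) G"
proof -
  have fin: "finite (S j)" and card: "(if j < d then a j else x) \<le> card (S j)" if "j \<in> {..d}" for j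
    using assms(1,6,7) that by auto
  obtain h where inj: "inj_on h (SIGMA j:{..d}. {..<(if j < d then a j else x)})"
    and h_in: "\<And>j i. j \<in> {..d} \<Longrightarrow> i < (if j < d then a j else x) \<Longrightarrow> h (j, i) \<in> S j"
    using obtain_inj_on_Sigma_into_parts[OF fin card assms(3)] by blast
  show ?thesis
    unfolding subgraph_iso_def
  proof (intro exI[of _ h] conjI ballI impI)
    show "inj_on h (verts (K_clique d a x))"
      using inj by (simp add: verts_K_clique)
    show "h ` verts (K_clique d a x) \<subseteq> verts G"
      using h_in assms(2) by (force simp: verts_K_clique)
  next
    fix u v assume "adj (K_clique d a x) u v"
    then have u: "u \<in> (SIGMA j:{..d}. {..<(if j < d then a j else x)})"
      and v: "v \<in> (SIGMA j:{..d}. {..<(if j < d then a j else x)})"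
      and "u \<noteq> v" and uv_parts: "fst u \<noteq> fst v \<or> fst u = d"
      by (auto simp: adj_K_clique verts_K_clique)
    have "h u \<noteq> h v"
      using inj u v \<open>u \<noteq> v\<close> by (auto dest: inj_onD)
    have part: "fst w \<in> {..d}" "h w \<in> S (fst w)" if "w \<in> (SIGMA j:{..d}. {..<(if j < d then a j else x)})" for w
      using that h_in by (cases w; auto)+
    show "adj G (h u) (h v)"
    proof (cases "fst u = fst v")
      case True
      then show ?thesis
        using assms(5) part[OF u] part[OF v] uv_parts \<open>h u \<noteq> h v\<close> by auto
    next
      case False
      then show ?thesis
        using cross_adjacentD[OF assms(4)] part[OF u] part[OF v] \<open>h u \<noteq> h v\<close> by blast
    qed
  qed
qed

definition shared :: "'i set \<Rightarrow> ('i \<Rightarrow> 'a set) \<Rightarrow> 'a set" where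
  "shared I P = {p. \<exists>j\<in>I. \<exists>k\<in>I. j \<noteq> k \<and> p \<in> P j \<and> p \<in> P k}"

lemma shared_subset_Union: "shared I P \<subseteq> (\<Union>j\<in>I. P j)"
  by (auto simp: shared_def)

lemma shared_obtain_other:
  assumes "p \<in> shared I P" and "j \<in> I"
  obtains k where "k \<in> I" and "k \<noteq> j" and "p \<in> P k"
  using assms unfolding shared_def by blast

lemma subgraph_iso_K_clique_shared:
  assumes fin: "\<And>j. j < d \<Longrightarrow> finite (P j)" and sub: "\<And>j. j < d \<Longrightarrow> P j \<subseteq> verts G"
    and cross: "cross_adjacent G {..<d} P"
  shows "subgraph_iso (K_clique d (\<lambda>j. card (P j - shared {..<d} P)) (card (shared {..<d} P))) G"
proof -
  define X where "X = shared {..<d} P"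
  define S where "S j = (if j < d then P j - X else X)" for j
  have X_sub: "X \<subseteq> (\<Union>j<d. P j)"
    unfolding X_def by (rule shared_subset_Union)
  have X_verts: "X \<subseteq> verts G"
    using X_sub sub by blast
  have adj_other: "adj G p q \<and> adj G q p" if "p \<in> P j" "j < d" "q \<in> X" "p \<noteq> q" for p q j
  proof -
    obtain k where "k < d" "k \<noteq> j" "q \<in> P k"
      using \<open>q \<in> X\<close> \<open>j < d\<close> unfolding X_def by (auto elim: shared_obtain_other)
    then show ?thesis using that cross by (metis cross_adjacentD lessThan_iff)
  qed
  show ?thesis
    unfolding X_def[symmetric]
  proof (rule subgraph_iso_K_cliqueI[where S = S])
    show "finite (S j)" if "j \<le> d" for j
      using fin finite_subset[OF X_sub] by (simp add: S_def)
    show "S j \<subseteq> verts G" if "j \<le> d" for j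
      using sub X_verts by (auto simp: S_def)
    show "disjoint_family_on S {..d}"
      by (auto simp: disjoint_family_on_def S_def X_def shared_def)
    show "cross_adjacent G {..d} S"
      unfolding cross_adjacent_def
    proof (intro ballI impI)
      fix j k p q assume "j \<in> {..d}" "k \<in> {..d}" "j \<noteq> k" "p \<in> S j" "q \<in> S k" "p \<noteq> q"
      then show "adj G p q"
        using adj_other[of p j q] adj_other[of q k p] cross
        by (cases "j < d"; cases "k < d") (auto simp: S_def intro: cross_adjacentD)
    qed
    show "adj G p q" if "p \<in> S d" "q \<in> S d" "p \<noteq> q" for p q
      using that X_sub adj_other by (fastforce simp: S_def)
  qed (simp_all add: S_def)
qed

lemma cross_adjacent_image:
  assumes "cross_adjacent H I P" and "\<And>j. j \<in> I \<Longrightarrow> P j \<subseteq> verts H"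
    and "\<forall>u\<in>verts H. \<forall>v\<in>verts H. adj H u v \<longrightarrow> adj G (f u) (f v)"
  shows "cross_adjacent G I (\<lambda>j. f ` P j)"
  unfolding cross_adjacent_def
proof (intro ballI impI)
  fix j k p q assume jk: "j \<in> I" "k \<in> I" "j \<noteq> k" and "p \<in> f ` P j" "q \<in> f ` P k" "p \<noteq> q"
  then obtain u v where uv: "u \<in> P j" "v \<in> P k" "p = f u" "q = f v"
    by blast
  with \<open>p \<noteq> q\<close> have "adj H u v"
    using cross_adjacentD[OF assms(1) jk] by blast
  with uv jk assms(2,3) show "adj G p q"
    by blast
qed

lemma cross_adjacent_fst:
  "cross_adjacent (strong_product G1 G2) I V \<Longrightarrow> cross_adjacent G1 I (\<lambda>j. fst ` V j)"
  unfolding cross_adjacent_def by (fastforce simp: adj_strong_product)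

lemma cross_adjacent_snd:
  "cross_adjacent (strong_product G1 G2) I V \<Longrightarrow> cross_adjacent G2 I (\<lambda>j. snd ` V j)"
  unfolding cross_adjacent_def by (fastforce simp: adj_strong_product)

lemma cross_adjacent_strong_product:
  assumes "cross_adjacent G1 I P" and "cross_adjacent G2 I Q"
  shows "cross_adjacent (strong_product G1 G2) I (\<lambda>j. P j \<times> Q j)"
  unfolding cross_adjacent_def
proof (intro ballI impI)
  fix j k p q
  assume jk: "j \<in> I" "k \<in> I" "j \<noteq> k" and p: "p \<in> P j \<times> Q j" and q: "q \<in> P k \<times> Q k" and "p \<noteq> q"
  then show "adj (strong_product G1 G2) p q"
    using cross_adjacentD[OF assms(1) jk] cross_adjacentD[OF assms(2) jk]
    by (auto simp: adj_strong_product mem_Times_iff)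
qed

lemma cross_adjacent_K_multipartite:
  "cross_adjacent (K_multipartite d n) {..<d} (\<lambda>j. {j} \<times> {..<n j})"
  by (auto simp: cross_adjacent_def adj_K_multipartite verts_K_multipartite)

lemma cross_adjacent_K_clique:
  "cross_adjacent (K_clique d a x) {..<d} (\<lambda>j. {j} \<times> {..<a j} \<union> {d} \<times> {..<x})"
  by (auto simp: cross_adjacent_def adj_K_clique verts_K_clique)

lemma subgraph_iso_trans:
  assumes "subgraph_iso H G" and "subgraph_iso G K"
  shows "subgraph_iso H K"
proof -
  obtain f where f: "inj_on f (verts H)" "f ` verts H \<subseteq> verts G"
    "\<forall>u\<in>verts H. \<forall>v\<in>verts H. adj H u v \<longrightarrow> adj G (f u) (f v)"
    using assms(1) unfolding subgraph_iso_def by blast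
  obtain g where g: "inj_on g (verts G)" "g ` verts G \<subseteq> verts K"
    "\<forall>u\<in>verts G. \<forall>v\<in>verts G. adj G u v \<longrightarrow> adj K (g u) (g v)"
    using assms(2) unfolding subgraph_iso_def by blast
  have "inj_on (g \<circ> f) (verts H)"
    using f(1) inj_on_subset[OF g(1) f(2)] by (rule comp_inj_on)
  with f g show ?thesis
    unfolding subgraph_iso_def by (intro exI[of _ "g \<circ> f"]) (auto simp: image_subset_iff)
qed

lemma subgraph_iso_strong_product_mono:
  assumes "subgraph_iso H1 G1" and "subgraph_iso H2 G2"
  shows "subgraph_iso (strong_product H1 H2) (strong_product G1 G2)"
proof -
  obtain f where f: "inj_on f (verts H1)" "f ` verts H1 \<subseteq> verts G1"
    "\<forall>u\<in>verts H1. \<forall>v\<in>verts H1. adj H1 u v \<longrightarrow> adj G1 (f u) (f v)"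
    using assms(1) unfolding subgraph_iso_def by blast
  obtain g where g: "inj_on g (verts H2)" "g ` verts H2 \<subseteq> verts G2"
    "\<forall>u\<in>verts H2. \<forall>v\<in>verts H2. adj H2 u v \<longrightarrow> adj G2 (g u) (g v)"
    using assms(2) unfolding subgraph_iso_def by blast
  have inj: "inj_on (map_prod f g) (verts H1 \<times> verts H2)"
    using f(1) g(1) by (rule map_prod_inj_on)
  show ?thesis
    unfolding subgraph_iso_def verts_strong_product
  proof (intro exI[of _ "map_prod f g"] conjI inj ballI impI)
    show "map_prod f g ` (verts H1 \<times> verts H2) \<subseteq> verts G1 \<times> verts G2"
      using f(2) g(2) by auto
  next
    fix u v assume uv: "u \<in> verts H1 \<times> verts H2" "v \<in> verts H1 \<times> verts H2"
      and "adj (strong_product H1 H2) u v"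
    then show "adj (strong_product G1 G2) (map_prod f g u) (map_prod f g v)"
      using f(3) g(3) inj_onD[OF inj _ uv] by (auto simp: adj_strong_product map_prod_def split: prod.splits)
  qed
qed

lemma card_times_minus_corner:
  assumes "finite A" "finite B" "finite X" "finite Y" and "A \<inter> X = {}" "B \<inter> Y = {}"
  shows "card ((A \<union> X) \<times> (B \<union> Y) - X \<times> Y) = card A * card B + card A * card Y + card B * card X"
proof -
  have "card ((A \<union> X) \<times> (B \<union> Y) - X \<times> Y) = (card A + card X) * (card B + card Y) - card X * card Y"
    using assms by (simp add: card_Diff_subset card_cartesian_product card_Un_disjoint Sigma_mono)
  then show ?thesis
    by (simp add: algebra_simps)
qed

lemma sum_card_Int_le:
  assumes "disjoint_family_on V I" and "finite I" and "finite W"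
  shows "(\<Sum>j\<in>I. card (V j \<inter> W)) \<le> card W"
proof -
  have "(\<Sum>j\<in>I. card (V j \<inter> W)) = card (\<Union>j\<in>I. V j \<inter> W)"
    using assms by (intro card_UN_disjoint'[symmetric]) (auto simp: disjoint_family_on_def)
  also have "\<dots> \<le> card W"
    using assms(3) by (intro card_mono) auto
  finally show ?thesis .
qed

lemma obtain_disjoint_subsets_with_card:
  fixes d :: nat
  assumes "finite W" and "(\<Sum>j<d. z j) \<le> card W"
  obtains Z where "disjoint_family_on Z {..<d}" and "\<And>j. j < d \<Longrightarrow> Z j \<subseteq> W \<and> card (Z j) = z j"
proof -
  have "\<exists>Z. disjoint_family_on Z {..<d} \<and> (\<forall>j<d. Z j \<subseteq> W \<and> card (Z j) = z j)"
    using assms(2)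
  proof (induction d)
    case 0
    then show ?case by (auto simp: disjoint_family_on_def)
  next
    case (Suc d)
    then obtain Z where disj: "disjoint_family_on Z {..<d}" and Z: "\<forall>j<d. Z j \<subseteq> W \<and> card (Z j) = z j"
      by auto
    have "card (\<Union>j<d. Z j) = (\<Sum>j<d. card (Z j))"
      using disj Z assms(1) by (intro card_UN_disjoint') (auto intro: finite_subset)
    also have "\<dots> = (\<Sum>j<d. z j)"
      using Z by simp
    finally have "card (\<Union>j<d. Z j) = (\<Sum>j<d. z j)" .
    then have "z d \<le> card (W - (\<Union>j<d. Z j))"
      using Suc.prems Z assms(1) by (subst card_Diff_subset) (auto intro: finite_subset)
    then obtain Zd where Zd: "Zd \<subseteq> W - (\<Union>j<d. Z j)" "card Zd = z d"
      by (rule obtain_subset_with_card_n)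
    have "disjoint_family_on (Z(d := Zd)) {..<Suc d}"
      using disj Zd(1) by (fastforce simp: disjoint_family_on_def)
    moreover have "\<forall>j<Suc d. (Z(d := Zd)) j \<subseteq> W \<and> card ((Z(d := Zd)) j) = z j"
      using Z Zd by (auto simp: less_Suc_eq)
    ultimately show ?case
      by blast
  qed
  with that show ?thesis by blast
qed

lemma card_le_times_minus_corner:
  assumes "V \<subseteq> (A \<union> X) \<times> (B \<union> Y)"
    and "finite A" "finite B" "finite X" "finite Y" and "A \<inter> X = {}" "B \<inter> Y = {}"
  shows "card V \<le> card A * card B + card A * card Y + card B * card X + card (V \<inter> X \<times> Y)"
proof -
  have fin: "finite ((A \<union> X) \<times> (B \<union> Y))"
    using assms(2-5) by simp
  have "card V \<le> card (((A \<union> X) \<times> (B \<union> Y) - X \<times> Y) \<union> (V \<inter> X \<times> Y))"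
    using assms(1) fin by (intro card_mono) (auto intro: finite_subset)
  also have "\<dots> \<le> card ((A \<union> X) \<times> (B \<union> Y) - X \<times> Y) + card (V \<inter> X \<times> Y)"
    by (rule card_Un_le)
  finally show ?thesis
    using card_times_minus_corner[OF assms(2-7)] by simp
qed

lemma subgraph_iso_K_multipartite_strong_productD:
  fixes G1 :: "'a graph" and G2 :: "'b graph"
  assumes "subgraph_iso (K_multipartite d n) (strong_product G1 G2)"
  obtains a b z x y where "subgraph_iso (K_clique d a x) G1" and "subgraph_iso (K_clique d b y) G2"
    and "\<And>j. j < d \<Longrightarrow> n j \<le> a j * b j + a j * y + b j * x + z j" and "(\<Sum>j<d. z j) \<le> x * y"
proof -
  obtain f where inj: "inj_on f (verts (K_multipartite d n))"
    and img: "f ` verts (K_multipartite d n) \<subseteq> verts G1 \<times> verts G2"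
    and hom: "\<forall>u\<in>verts (K_multipartite d n). \<forall>v\<in>verts (K_multipartite d n).
      adj (K_multipartite d n) u v \<longrightarrow> adj (strong_product G1 G2) (f u) (f v)"
    using assms unfolding subgraph_iso_def verts_strong_product by blast
  define V where "V = (\<lambda>j. f ` ({j} \<times> {..<n j}))"
  define P1 where "P1 = (\<lambda>j. fst ` V j)"
  define P2 where "P2 = (\<lambda>j. snd ` V j)"
  define X where "X = shared {..<d} P1"
  define Y where "Y = shared {..<d} P2"
  have V_verts: "V j \<subseteq> verts G1 \<times> verts G2" if "j < d" for j
    using img that by (auto simp: V_def verts_K_multipartite)
  have cross: "cross_adjacent (strong_product G1 G2) {..<d} V"
    unfolding V_def
    by (rule cross_adjacent_image[OF cross_adjacent_K_multipartite _ hom]) (auto simp: verts_K_multipartite)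
  have fin: "finite (P1 j)" "finite (P2 j)" for j
    by (simp_all add: P1_def P2_def V_def)
  have finXY: "finite X" "finite Y"
    unfolding X_def Y_def using fin by (intro finite_subset[OF shared_subset_Union] finite_UN_I; simp)+
  have K1: "subgraph_iso (K_clique d (\<lambda>j. card (P1 j - X)) (card X)) G1"
    unfolding X_def using fin cross_adjacent_fst[OF cross]
    by (intro subgraph_iso_K_clique_shared) (auto simp: P1_def dest: V_verts[THEN subsetD])
  have K2: "subgraph_iso (K_clique d (\<lambda>j. card (P2 j - Y)) (card Y)) G2"
    unfolding Y_def using fin cross_adjacent_snd[OF cross]
    by (intro subgraph_iso_K_clique_shared) (auto simp: P2_def dest: V_verts[THEN subsetD])
  have V_grid: "V j \<subseteq> ((P1 j - X) \<union> X) \<times> ((P2 j - Y) \<union> Y)" for j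
    by (force simp: P1_def P2_def)
  have bound: "n j \<le> card (P1 j - X) * card (P2 j - Y) + card (P1 j - X) * card Y
      + card (P2 j - Y) * card X + card (V j \<inter> X \<times> Y)" if "j < d" for j
  proof -
    have "inj_on f ({j} \<times> {..<n j})"
      using inj by (rule inj_on_subset) (use that in \<open>auto simp: verts_K_multipartite\<close>)
    then have "n j = card (V j)"
      by (simp add: V_def card_image card_cartesian_product)
    also have "\<dots> \<le> card (P1 j - X) * card (P2 j - Y) + card (P1 j - X) * card Y
        + card (P2 j - Y) * card X + card (V j \<inter> X \<times> Y)"
      using V_grid by (rule card_le_times_minus_corner) (use fin finXY in auto)
    finally show ?thesis .
  qed
  have "disjoint_family_on V {..<d}"
    using inj by (auto simp: disjoint_family_on_def V_def verts_K_multipartite inj_on_def)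
  then have "(\<Sum>j<d. card (V j \<inter> X \<times> Y)) \<le> card X * card Y"
    using sum_card_Int_le[of V "{..<d}" "X \<times> Y"] finXY by (simp add: card_cartesian_product)
  with K1 K2 bound show thesis
    by (rule that)
qed

lemma subgraph_iso_K_multipartite_strong_productI:
  fixes G1 :: "'a graph" and G2 :: "'b graph"
  assumes K1: "subgraph_iso (K_clique d a x) G1" and K2: "subgraph_iso (K_clique d b y) G2"
    and bound: "\<And>j. j < d \<Longrightarrow> n j \<le> a j * b j + a j * y + b j * x + z j"
    and sum: "(\<Sum>j<d. z j) \<le> x * y"
  shows "subgraph_iso (K_multipartite d n) (strong_product G1 G2)"
proof -
  define A where "A j = {j} \<times> {..<a j}" for j
  define B where "B j = {j} \<times> {..<b j}" for j
  define D where "D = {d} \<times> {..<x}"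
  define E where "E = {d} \<times> {..<y}"
  obtain Z where Z_disj: "disjoint_family_on Z {..<d}" and Z: "\<And>j. j < d \<Longrightarrow> Z j \<subseteq> D \<times> E \<and> card (Z j) = z j"
    using obtain_disjoint_subsets_with_card[where W = "D \<times> E" and d = d and z = z] sum
    by (auto simp: D_def E_def card_cartesian_product)
  define T where "T j = ((A j \<union> D) \<times> (B j \<union> E) - D \<times> E) \<union> Z j" for j
  have fin: "finite (A j)" "finite (B j)" "finite D" "finite E" for j
    by (simp_all add: A_def B_def D_def E_def)
  have "subgraph_iso (K_multipartite d n) (strong_product (K_clique d a x) (K_clique d b y))"
  proof (rule subgraph_iso_K_multipartiteI)
    show "finite (T j)" if "j < d" for j
      using fin Z[OF that] by (auto simp: T_def intro: finite_subset)
    show "T j \<subseteq> verts (strong_product (K_clique d a x) (K_clique d b y))" if "j < d" for j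
      using Z[OF that] that
      by (auto simp: T_def A_def B_def D_def E_def verts_strong_product verts_K_clique)
    show "n j \<le> card (T j)" if "j < d" for j
    proof -
      have disj: "A j \<inter> D = {}" "B j \<inter> E = {}"
        using that by (auto simp: A_def B_def D_def E_def)
      have "card (T j) = card ((A j \<union> D) \<times> (B j \<union> E) - D \<times> E) + card (Z j)"
        unfolding T_def using Z[OF that] fin by (intro card_Un_disjoint) (auto intro: finite_subset)
      also have "\<dots> = a j * b j + a j * y + b j * x + z j"
        using card_times_minus_corner[OF fin disj] Z[OF that]
        by (simp add: A_def B_def D_def E_def card_cartesian_product)
      finally show ?thesis
        using bound[OF that] by simp
    qed
    show "disjoint_family_on T {..<d}"
      unfolding disjoint_family_on_def
    proof (intro ballI impI)
      fix j k assume jk: "j \<in> {..<d}" "k \<in> {..<d}" "j \<noteq> k"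
      have "((A j \<union> D) \<times> (B j \<union> E) - D \<times> E) \<inter> ((A k \<union> D) \<times> (B k \<union> E) - D \<times> E) = {}"
        using jk by (auto simp: A_def B_def D_def E_def)
      moreover have "Z j \<inter> Z k = {}"
        using Z_disj jk by (auto simp: disjoint_family_on_def)
      ultimately show "T j \<inter> T k = {}"
        using Z jk by (auto simp: T_def)
    qed
    have "cross_adjacent (strong_product (K_clique d a x) (K_clique d b y)) {..<d} (\<lambda>j. (A j \<union> D) \<times> (B j \<union> E))"
      unfolding A_def B_def D_def E_def
      by (intro cross_adjacent_strong_product cross_adjacent_K_clique)
    then show "cross_adjacent (strong_product (K_clique d a x) (K_clique d b y)) {..<d} T"
      by (rule cross_adjacent_mono) (use Z in \<open>auto simp: T_def\<close>)
  qed
  then show ?thesis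
    using subgraph_iso_trans subgraph_iso_strong_product_mono K1 K2 by blast
qed

theorem mainTheorem3:
  fixes G1 :: "'a graph" and G2 :: "'b graph" and d :: nat and n :: "nat \<Rightarrow> nat"
  assumes "graph G1" and "graph G2" and "d \<ge> 2" and "\<forall>j<d. n j \<ge> 1"
  shows "subgraph_iso (K_multipartite d n) (strong_product G1 G2) \<longleftrightarrow>
    (\<exists>(a :: nat \<Rightarrow> nat) (b :: nat \<Rightarrow> nat) (z :: nat \<Rightarrow> nat) (x :: nat) (y :: nat).
       subgraph_iso (K_clique d a x) G1 \<and>
       subgraph_iso (K_clique d b y) G2 \<and>
       (\<forall>j<d. n j \<le> a j * b j + a j * y + b j * x + z j) \<and>
       (\<Sum>j<d. z j) \<le> x * y)"
proof
  assume "subgraph_iso (K_multipartite d n) (strong_product G1 G2)"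
  then show "\<exists>a b z x y. subgraph_iso (K_clique d a x) G1 \<and> subgraph_iso (K_clique d b y) G2 \<and>
      (\<forall>j<d. n j \<le> a j * b j + a j * y + b j * x + z j) \<and> (\<Sum>j<d. z j) \<le> x * y"
    by (elim subgraph_iso_K_multipartite_strong_productD) blast
next
  assume "\<exists>a b z x y. subgraph_iso (K_clique d a x) G1 \<and> subgraph_iso (K_clique d b y) G2 \<and>
      (\<forall>j<d. n j \<le> a j * b j + a j * y + b j * x + z j) \<and> (\<Sum>j<d. z j) \<le> x * y"
  then show "subgraph_iso (K_multipartite d n) (strong_product G1 G2)"
    by (blast intro: subgraph_iso_K_multipartite_strong_productI)
qed

end
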